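(* Assume the standing setup in the context, and assume one of the sample times equals $0$, so that $x^*(0)$ is a column of $\Lambda_0$. Then the optimal solution set of (P1) and the feasible set of (P2) coincide under the following correspondences. (i) If $(\hat A,\hat B,\hat Q,\hat R,\hat P)$ is an optimal solution of (P1), set $Z=\hat A^\top\hat P$ and $M=\hat A-\hat BK^*$. Then $(Z,\hat Q,\hat R,\hat P,M)$ is feasible for (P2). (ii) Conversely, let $(Z,\hat Q,\hat R,\hat P,M)$ be feasible for (P2), and set $\hat A=\hat P^{-1}Z^\top$ and $\hat B=\hat P^{-1}K^{*\top}\hat R$. Then $(\hat A,\hat B,\hat Q,\hat R,\hat P)$ is an optimal solution of (P1), with objective value $0$ and $\hat R^{-1}\hat B^\top\hat P=K^*$.
   Context: Standing setup. The true system is given by $A\in\mathbb{R}^{n\times n}$ and $B\in\mathbb{R}^{n\times m}$, with $(A,B)$ stabilizable. The true weights are $Q$, symmetric positive semidefinite, and $R$, symmetric positive definite, with $(A,Q^{1/2})$ detectable. $P$ is the unique symmetric positive definite (stabilizing) solution of $A^\top P+PA-PBR^{-1}B^\top P+Q=0$. Set $K^*=R^{-1}B^\top P$ and $A_K^*=A-BK^*$. The expert trajectory is $x^*(t)=e^{A_K^*t}x^*(0)$ for $t\in[0,T]$, with $T>0$. Fix $\epsilon>0$. Problem (P1): minimize, over $\hat A\in\mathbb{R}^{n\times n}$, $\hat B\in\mathbb{R}^{n\times m}$ and symmetric $\hat Q,\hat R,\hat P$ (of sizes $n,m,n$), the objective $J=\|\hat K-K^*\|_2^2+\int_0^T\|\hat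 x(t)-x^*(t)\|_2^2\,dt$, subject to the following constraints: - $\hat A^\top\hat P+\hat P\hat A-\hat P\hat B\hat R^{-1}\hat B^\top\hat P+\hat Q=0$; - $\hat K=\hat R^{-1}\hat B^\top\hat P$; - $\hat x(t)=e^{(\hat A-\hat B\hat K)t}x^*(0)$; - $\hat Q\succeq0$, $\hat R\succeq\epsilon I$, $\hat P\succeq\epsilon I$. Data matrices: fix sample times $t_1,\dots,t_N\in[0,T]$. Let $x^{*(i)}$ denote the $i$-th derivative of $x^*$, and set $\Lambda_i=[x^{*(i)}(t_1)\cdots x^{*(i)}(t_N)]$ for $i=0,\dots,n$. Define $\bar\Lambda_1=[\Lambda_0\cdots\Lambda_{n-1}]$ and $\bar\Lambda_2=[\Lambda_1\cdots\Lambda_n]$. Problem (P2), a feasibility problem: find $Z\in\mathbb{R}^{n\times n}$, $M\in\mathbb{R}^{n\times n}$ and symmetric $\hat Q,\hat R,\hat P$ such that - $Z^\top+Z-K^{*\top}\hat RK^*+\hat Q=0$; - $Z^\top-K^{*\top}\hat RK^*=\hat PM$; - $M\bar\Lambda_1=\bar\Lambda_2$; - $\hat Q\succeq0$, $\hat R\succeq\epsilon I$, $\hat P\succeq\epsilon I$. *)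

theory Defs
  imports "HOL-Analysis.Analysis"
begin

primrec mpow :: "real^'n^'n \<Rightarrow> nat \<Rightarrow> real^'n^'n" where
  "mpow A 0 = mat 1"
| "mpow A (Suc k) = A ** mpow A k"

definition mexp :: "real^'n^'n \<Rightarrow> real^'n^'n" where
  "mexp A = (\<Sum>k. (1 / fact k) *\<^sub>R mpow A k)"

definition sym_mat :: "real^'n^'n \<Rightarrow> bool" where
  "sym_mat S \<longleftrightarrow> transpose S = S"

(* S \<succeq> c I  (for symmetric S) *)
definition psd_ge :: "real^'n^'n \<Rightarrow> real \<Rightarrow> bool" where
  "psd_ge S c \<longleftrightarrow> (\<forall>x. x \<bullet> (S *v x) \<ge> c * (x \<bullet> x))"

definition pd_mat :: "real^'n^'n \<Rightarrow> bool" where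
  "pd_mat S \<longleftrightarrow> (\<forall>x. x \<noteq> 0 \<longrightarrow> x \<bullet> (S *v x) > 0)"

definition cmat :: "real^'n^'m \<Rightarrow> complex^'n^'m" where
  "cmat A = (\<chi> i j. complex_of_real (A $ i $ j))"

definition hurwitz :: "real^'n^'n \<Rightarrow> bool" where
  "hurwitz A \<longleftrightarrow> (\<forall>s::complex. det (mat s - cmat A) = 0 \<longrightarrow> Re s < 0)"

definition stabilizable :: "real^'n^'n \<Rightarrow> real^'m^'n \<Rightarrow> bool" where
  "stabilizable A B \<longleftrightarrow> (\<exists>K::real^'n^'m. hurwitz (A - B ** K))"

definition detectable :: "real^'n^'n \<Rightarrow> real^'n^'p \<Rightarrow> bool" where
  "detectable A C \<longleftrightarrow> (\<exists>L::real^'p^'n. hurwitz (A - L ** C))"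

definition riccati :: "real^'n^'n \<Rightarrow> real^'m^'n \<Rightarrow> real^'n^'n \<Rightarrow> real^'m^'m \<Rightarrow> real^'n^'n \<Rightarrow> real^'n^'n" where
  "riccati A B Q R P = transpose A ** P + P ** A - P ** B ** matrix_inv R ** transpose B ** P + Q"

definition gain :: "real^'m^'n \<Rightarrow> real^'m^'m \<Rightarrow> real^'n^'n \<Rightarrow> real^'n^'m" where
  "gain B R P = matrix_inv R ** transpose B ** P"

definition traj :: "real^'n^'n \<Rightarrow> real^'m^'n \<Rightarrow> real^'n^'m \<Rightarrow> real^'n \<Rightarrow> real \<Rightarrow> real^'n" where
  "traj A B K x0 t = mexp (t *\<^sub>R (A - B ** K)) *v x0"

primrec nderiv :: "nat \<Rightarrow> (real \<Rightarrow> real^'n) \<Rightarrow> real \<Rightarrow> real^'n" where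
  "nderiv 0 f = f"
| "nderiv (Suc i) f = (\<lambda>t. vector_derivative (nderiv i f) (at t))"

definition mnorm2 :: "real^'n^'m \<Rightarrow> real" where
  "mnorm2 M = onorm (\<lambda>x. M *v x)"

definition J1 :: "real^'n^'m \<Rightarrow> real^'n^'n \<Rightarrow> real^'n \<Rightarrow> real
     \<Rightarrow> real^'n^'n \<Rightarrow> real^'m^'n \<Rightarrow> real^'n^'n \<Rightarrow> real^'m^'m \<Rightarrow> real^'n^'n \<Rightarrow> real" where
  "J1 Ks AKs x0 T Ah Bh Qh Rh Ph =
     (mnorm2 (gain Bh Rh Ph - Ks))\<^sup>2
     + integral {0..T} (\<lambda>t. (norm (traj Ah Bh (gain Bh Rh Ph) x0 t - mexp (t *\<^sub>R AKs) *v x0))\<^sup>2)"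

definition P1_feasible :: "real \<Rightarrow> real^'n^'n \<Rightarrow> real^'m^'n \<Rightarrow> real^'n^'n \<Rightarrow> real^'m^'m \<Rightarrow> real^'n^'n \<Rightarrow> bool" where
  "P1_feasible \<epsilon> Ah Bh Qh Rh Ph \<longleftrightarrow>
     sym_mat Qh \<and> sym_mat Rh \<and> sym_mat Ph \<and>
     riccati Ah Bh Qh Rh Ph = 0 \<and>
     psd_ge Qh 0 \<and> psd_ge Rh \<epsilon> \<and> psd_ge Ph \<epsilon>"

definition P1_optimal :: "real \<Rightarrow> real^'n^'m \<Rightarrow> real^'n^'n \<Rightarrow> real^'n \<Rightarrow> real
     \<Rightarrow> real^'n^'n \<Rightarrow> real^'m^'n \<Rightarrow> real^'n^'n \<Rightarrow> real^'m^'m \<Rightarrow> real^'n^'n \<Rightarrow> bool" where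
  "P1_optimal \<epsilon> Ks AKs x0 T Ah Bh Qh Rh Ph \<longleftrightarrow>
     P1_feasible \<epsilon> Ah Bh Qh Rh Ph \<and>
     (\<forall>A' B' Q' R' P'. P1_feasible \<epsilon> A' B' Q' R' P' \<longrightarrow>
        J1 Ks AKs x0 T Ah Bh Qh Rh Ph \<le> J1 Ks AKs x0 T A' B' Q' R' P')"

(* feasible set of (P2); xs is the expert trajectory, ts the list of sample times.
   M Lambda1bar = Lambda2bar is written column by column. *)
definition P2_feasible :: "real \<Rightarrow> real^'n^'m \<Rightarrow> (real \<Rightarrow> real^'n) \<Rightarrow> real list
     \<Rightarrow> real^'n^'n \<Rightarrow> real^'n^'n \<Rightarrow> real^'m^'m \<Rightarrow> real^'n^'n \<Rightarrow> real^'n^'n \<Rightarrow> bool" where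
  "P2_feasible \<epsilon> Ks xs ts Z Qh Rh Ph M \<longleftrightarrow>
     sym_mat Qh \<and> sym_mat Rh \<and> sym_mat Ph \<and>
     transpose Z + Z - transpose Ks ** Rh ** Ks + Qh = 0 \<and>
     transpose Z - transpose Ks ** Rh ** Ks = Ph ** M \<and>
     (\<forall>i < CARD('n). \<forall>t \<in> set ts. M *v nderiv i xs t = nderiv (Suc i) xs t) \<and>
     psd_ge Qh 0 \<and> psd_ge Rh \<epsilon> \<and> psd_ge Ph \<epsilon>"

end

theory Submission
  imports Defs
begin

text \<open>The objective of (P1) is a sum of two nonnegative terms, and the value 0 is attained:
  the Riccati equation and the gain are homogeneous in (Q, R, P), so scaling the true weights by
  a large factor gives a feasible point that reproduces K* and the expert trajectory. Hence the
  optimal points of (P1) are exactly the feasible points with gain K* whose closed loop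
  M = A - B K* satisfies exp(tM) x0 = exp(t A_K*) x0 on [0, T].
  With Z = A^T P, the Riccati equation together with gain K* is equivalent to the two linear
  equations of (P2). Agreement of the trajectories on an interval is equivalent to
  M A_K*^i x0 = A_K*^(i+1) x0 for all i: one direction by differentiating, the other because
  the Krylov vectors A_K*^i x0, i < n, already span an invariant subspace, so the conditions for
  i < n, which are the sampled derivative conditions at t = 0, suffice.\<close>

section \<open>Matrix exponential\<close>

lemma mpow_commute: "mpow A k ** A = A ** mpow A k"
  by (induction k) (simp_all add: matrix_mul_assoc[symmetric])

lemma mpow_Suc_right: "mpow A (Suc k) = mpow A k ** A"
  by (simp add: mpow_commute)

lemma mpow_scaleR: "mpow (t *\<^sub>R A) k = (t ^ k) *\<^sub>R mpow A k"
  by (induction k) (simp_all add: matrix_scalar_ac scalar_matrix_assoc[symmetric])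

lemma norm_mpow_mult_vector_le:
  "norm (mpow A k *v y) \<le> onorm ((*v) A) ^ k * norm (y::real^'n)"
proof (induction k)
  case 0 then show ?case by simp
next
  case (Suc k)
  have "norm (mpow A (Suc k) *v y) = norm (A *v (mpow A k *v y))"
    by (simp add: matrix_vector_mul_assoc)
  also have "\<dots> \<le> onorm ((*v) A) * norm (mpow A k *v y)"
    by (rule onorm) simp
  also have "\<dots> \<le> onorm ((*v) A) * (onorm ((*v) A) ^ k * norm y)"
    by (rule mult_left_mono[OF Suc.IH]) (simp add: onorm_pos_le)
  finally show ?case by (simp add: mult_ac)
qed

lemma norm_matrix_le_onorm:
  fixes M :: "real^'n^'m"
  shows "norm M \<le> real CARD('m) * real CARD('n) * onorm ((*v) M)"
proof -
  have "norm M \<le> (\<Sum>i\<in>UNIV. norm (M $ i))"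
    unfolding norm_vec_def by (rule L2_set_le_sum) simp
  also have "\<dots> \<le> (\<Sum>i\<in>UNIV. \<Sum>j\<in>UNIV. \<bar>M $ i $ j\<bar>)"
    by (intro sum_mono norm_le_l1_cart)
  also have "\<dots> \<le> (\<Sum>i\<in>(UNIV::'m set). \<Sum>j\<in>(UNIV::'n set). onorm ((*v) M))"
    by (rule sum_mono)+ (rule matrix_component_le_onorm)
  finally show ?thesis by simp
qed

lemma onorm_mpow_le: "onorm ((*v) (mpow A k)) \<le> onorm ((*v) (A::real^'n^'n)) ^ k"
  by (rule onorm_le) (rule norm_mpow_mult_vector_le)

lemma summable_mexp:
  fixes A :: "real^'n^'n"
  shows "summable (\<lambda>k. (1 / fact k) *\<^sub>R mpow A k)"
proof (rule summable_comparison_test)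
  let ?C = "real CARD('n) * real CARD('n)" and ?L = "onorm ((*v) A)"
  have "norm ((1 / fact k) *\<^sub>R mpow A k) \<le> ?C * (inverse (fact k) * ?L ^ k)" for k
  proof -
    have "norm (mpow A k) \<le> ?C * onorm ((*v) (mpow A k))"
      by (rule norm_matrix_le_onorm)
    also have "\<dots> \<le> ?C * ?L ^ k"
      by (rule mult_left_mono[OF onorm_mpow_le]) simp
    finally have "norm (mpow A k) \<le> ?C * ?L ^ k" .
    then show ?thesis by (simp add: divide_inverse mult_left_mono mult.left_commute)
  qed
  then show "\<exists>N. \<forall>k\<ge>N. norm ((1 / fact k) *\<^sub>R mpow A k) \<le> ?C * (inverse (fact k) * ?L ^ k)"
    by blast
  show "summable (\<lambda>k. ?C * (inverse (fact k) * ?L ^ k))"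
    by (rule summable_mult) (rule summable_exp)
qed

lemma bounded_linear_matrix_vector_mult_left: "bounded_linear (\<lambda>M::real^'n^'m. M *v y)"
  by (rule linear_conv_bounded_linear[THEN iffD1], rule linearI)
    (simp_all add: matrix_vector_mult_add_rdistrib scaleR_matrix_vector_assoc)

lemma mexp_mult_vector_sums:
  fixes A :: "real^'n^'n"
  shows "(\<lambda>k. (1 / fact k) *\<^sub>R (mpow A k *v y)) sums (mexp A *v y)"
proof -
  have "(\<lambda>k. (1 / fact k) *\<^sub>R mpow A k) sums mexp A"
    unfolding mexp_def by (rule summable_sums[OF summable_mexp])
  from bounded_linear.sums[OF bounded_linear_matrix_vector_mult_left this, of y]
  show ?thesis by (simp add: scaleR_matrix_vector_assoc)
qed

lemma mexp_component_power_series: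
  fixes A :: "real^'n^'n"
  shows "(\<lambda>k. ((mpow A k *v y) $ i / fact k) * t ^ k) sums ((mexp (t *\<^sub>R A) *v y) $ i)"
proof -
  have "(\<lambda>k. ((1 / fact k) *\<^sub>R (mpow (t *\<^sub>R A) k *v y)) $ i) sums ((mexp (t *\<^sub>R A) *v y) $ i)"
    by (rule bounded_linear.sums[OF bounded_linear_vec_nth mexp_mult_vector_sums])
  then show ?thesis
    by (simp add: mpow_scaleR scaleR_matrix_vector_assoc[symmetric] mult.commute)
qed

lemma diffs_mexp_component_coeffs:
  fixes A :: "real^'n^'n"
  shows "diffs (\<lambda>k. (mpow A k *v y) $ i / fact k) = (\<lambda>k. (mpow A k *v (A *v y)) $ i / fact k)"
proof
  fix k
  have "mpow A (Suc k) *v y = mpow A k *v (A *v y)"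
    by (simp only: mpow_Suc_right matrix_vector_mul_assoc)
  then show "diffs (\<lambda>k. (mpow A k *v y) $ i / fact k) k = (mpow A k *v (A *v y)) $ i / fact k"
    unfolding diffs_def by (simp only: fact_Suc of_nat_mult) (simp del: mpow.simps of_nat_Suc)
qed

lemma mexp_has_vector_derivative:
  fixes A :: "real^'n^'n"
  shows "((\<lambda>t. mexp (t *\<^sub>R A) *v y) has_vector_derivative (mexp (t *\<^sub>R A) *v (A *v y))) (at t within S)"
  unfolding has_vector_derivative_def
proof (subst has_derivative_componentwise_within, intro ballI)
  fix b :: "real^'n" assume "b \<in> Basis"
  then obtain i where b: "b = axis i 1" by (auto simp: Basis_vec_def)
  let ?c = "\<lambda>k. (mpow A k *v y) $ i / fact k"
  have "((\<lambda>t. \<Sum>k. ?c k * t ^ k) has_field_derivative (\<Sum>k. diffs ?c k * t ^ k)) (at t)"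
    by (rule termdiffs_strong_converges_everywhere)
      (rule sums_summable[OF mexp_component_power_series])
  then have "((\<lambda>t. (mexp (t *\<^sub>R A) *v y) $ i) has_field_derivative ((mexp (t *\<^sub>R A) *v (A *v y)) $ i)) (at t within S)"
    by (simp add: diffs_mexp_component_coeffs sums_unique[OF mexp_component_power_series]
        has_field_derivative_at_within)
  then show "((\<lambda>t. (mexp (t *\<^sub>R A) *v y) \<bullet> b) has_derivative (\<lambda>h. (h *\<^sub>R (mexp (t *\<^sub>R A) *v (A *v y))) \<bullet> b)) (at t within S)"
    by (simp add: b inner_axis has_field_derivative_def mult_commute_abs)
qed

lemma continuous_on_mexp: "continuous_on S (\<lambda>t. mexp (t *\<^sub>R (A::real^'n^'n)) *v y)"
  by (rule continuous_on_vector_derivative) (rule mexp_has_vector_derivative)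

lemma mexp_zero_mult_vector: "mexp 0 *v y = (y::real^'n)"
proof -
  have "(mexp 0 *v y) $ i = y $ i" for i
  proof -
    have "(\<lambda>k. ((mpow (0::real^'n^'n) k *v y) $ i / fact k) * 0 ^ k) sums ((mexp 0 *v y) $ i)"
      using mexp_component_power_series[where A = 0 and t = 0] unfolding scaleR_zero_left .
    moreover have "(\<lambda>k. ((mpow (0::real^'n^'n) k *v y) $ i / fact k) * 0 ^ k) sums (y $ i)"
      using powser_sums_zero[of "\<lambda>k. (mpow (0::real^'n^'n) k *v y) $ i / fact k"] by simp
    ultimately show ?thesis by (rule sums_unique2)
  qed
  then show ?thesis by (simp add: vec_eq_iff)
qed

lemma mexp_mult_vector_commute:
  fixes A :: "real^'n^'n"
  shows "A *v (mexp (t *\<^sub>R A) *v y) = mexp (t *\<^sub>R A) *v (A *v y)"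
proof -
  have "(\<lambda>k. A *v ((1 / fact k) *\<^sub>R (mpow (t *\<^sub>R A) k *v y))) sums (A *v (mexp (t *\<^sub>R A) *v y))"
    by (rule bounded_linear.sums[OF matrix_vector_mul_bounded_linear mexp_mult_vector_sums])
  moreover have "A *v ((1 / fact k) *\<^sub>R (mpow (t *\<^sub>R A) k *v y)) = (1 / fact k) *\<^sub>R (mpow (t *\<^sub>R A) k *v (A *v y))" for k
  proof -
    have "A *v (mpow A k *v y) = mpow A k *v (A *v y)"
      by (simp add: matrix_vector_mul_assoc mpow_commute)
    then show ?thesis
      by (simp add: mpow_scaleR scaleR_matrix_vector_assoc[symmetric] matrix_vector_mult_scaleR)
  qed
  ultimately show ?thesis
    using mexp_mult_vector_sums[of "t *\<^sub>R A" "A *v y"] by (simp add: sums_unique2)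
qed

lemma nderiv_mexp:
  fixes A :: "real^'n^'n"
  shows "nderiv i (\<lambda>t. mexp (t *\<^sub>R A) *v y) = (\<lambda>t. mexp (t *\<^sub>R A) *v (mpow A i *v y))"
proof (induction i)
  case 0 then show ?case by simp
next
  case (Suc i)
  have "vector_derivative (\<lambda>t. mexp (t *\<^sub>R A) *v (mpow A i *v y)) (at t)
      = mexp (t *\<^sub>R A) *v (A *v (mpow A i *v y))" for t
    by (rule vector_derivative_at) (rule mexp_has_vector_derivative)
  then show ?case by (simp add: Suc.IH matrix_vector_mul_assoc)
qed

section \<open>Krylov vectors and agreement of trajectories\<close>

lemma exists_in_span_of_predecessors:
  fixes v :: "nat \<Rightarrow> real^'n"
  shows "\<exists>k \<le> CARD('n). v k \<in> span (v ` {..<k})"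
proof (rule ccontr)
  assume "\<not> ?thesis"
  then have indep: "v k \<notin> span (v ` {..<k})" if "k \<le> CARD('n)" for k
    using that by auto
  have "dim (v ` {..<k}) = k" if "k \<le> Suc (CARD('n))" for k
    using that
  proof (induction k)
    case 0 then show ?case by simp
  next
    case (Suc k)
    then show ?case using indep[of k] by (simp add: lessThan_Suc dim_insert)
  qed
  then have "dim (v ` {..<Suc (CARD('n))}) = Suc (CARD('n))" by simp
  with dim_subset_UNIV_cart[of "v ` {..<Suc (CARD('n))}"] show False by simp
qed

lemma orbit_in_span_of_initial_segment:
  fixes f :: "'a::real_vector \<Rightarrow> 'a"
  assumes "linear f" and orbit: "\<And>i. v (Suc i) = f (v i)"
    and closed: "v k \<in> span (v ` {..<k})"
  shows "v j \<in> span (v ` {..<k})"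
proof -
  have "f ` v ` {..<k} \<subseteq> span (v ` {..<k})"
  proof
    fix z assume "z \<in> f ` v ` {..<k}"
    then obtain i where "i < k" "z = v (Suc i)" by (auto simp: orbit)
    then show "z \<in> span (v ` {..<k})"
      using closed by (cases "Suc i = k") (auto intro: span_base)
  qed
  then have invariant: "f z \<in> span (v ` {..<k})" if "z \<in> span (v ` {..<k})" for z
    using that span_linear_image[OF \<open>linear f\<close>] span_minimal[OF _ subspace_span]
    by (metis image_eqI subsetD)
  show ?thesis
  proof (induction j)
    case 0
    then show ?case using closed by (cases k) (auto intro: span_base)
  next
    case (Suc j)
    then show ?case by (simp add: orbit invariant)
  qed
qed

lemma mpow_mult_vector_eq_of_krylov:
  fixes M N :: "real^'n^'n"
  assumes agree: "\<And>i. i < CARD('n) \<Longrightarrow> M *v (mpow N i *v x) = mpow N (Suc i) *v x"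
  shows "mpow M k *v x = mpow N k *v x"
proof -
  define v where "v i = mpow N i *v x" for i
  have orbit: "v (Suc i) = N *v v i" for i
    by (simp add: v_def matrix_vector_mul_assoc)
  obtain k0 where k0: "k0 \<le> CARD('n)" "v k0 \<in> span (v ` {..<k0})"
    using exists_in_span_of_predecessors by blast
  have "M *v z = N *v z" if "z \<in> span (v ` {..<k0})" for z
    by (rule linear_eq_on_span[OF _ _ _ that])
      (use agree k0(1) in \<open>auto simp: v_def matrix_vector_mul_assoc\<close>)
  then have "M *v v j = N *v v j" for j
    using orbit_in_span_of_initial_segment[OF _ orbit k0(2)] by simp
  then show ?thesis
    by (induction k) (simp_all add: v_def matrix_vector_mul_assoc[symmetric])
qed

lemma mexp_mult_vector_eq_of_mpow_eq:
  fixes M N :: "real^'n^'n"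
  assumes "\<And>k. mpow M k *v x = mpow N k *v x"
  shows "mexp (t *\<^sub>R M) *v x = mexp (t *\<^sub>R N) *v x"
proof -
  have "(\<lambda>k. (1 / fact k) *\<^sub>R (mpow (t *\<^sub>R M) k *v x)) sums (mexp (t *\<^sub>R N) *v x)"
    using mexp_mult_vector_sums[of "t *\<^sub>R N" x]
    by (simp add: mpow_scaleR scaleR_matrix_vector_assoc[symmetric] assms)
  then show ?thesis using mexp_mult_vector_sums[of "t *\<^sub>R M" x] by (simp add: sums_iff)
qed

lemma mexp_mult_mpow_eq_on_interval:
  fixes M N :: "real^'n^'n"
  assumes "T > 0" and eq: "\<And>t. t \<in> {0..T} \<Longrightarrow> mexp (t *\<^sub>R M) *v x = mexp (t *\<^sub>R N) *v x"
    and "t \<in> {0..T}"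
  shows "mexp (t *\<^sub>R M) *v (mpow M i *v x) = mexp (t *\<^sub>R N) *v (mpow N i *v x)"
  using \<open>t \<in> {0..T}\<close>
proof (induction i arbitrary: t)
  case 0
  then show ?case using eq by simp
next
  case (Suc i)
  have M_derivative: "((\<lambda>s. mexp (s *\<^sub>R M) *v (mpow M i *v x)) has_vector_derivative
      mexp (t *\<^sub>R N) *v (N *v (mpow N i *v x))) (at t within cbox 0 T)"
    by (rule has_vector_derivative_transform[OF _ _ mexp_has_vector_derivative])
      (use Suc in auto)
  have "mexp (t *\<^sub>R M) *v (M *v (mpow M i *v x)) = mexp (t *\<^sub>R N) *v (N *v (mpow N i *v x))"
    by (rule vector_derivative_unique_within_closed_interval[OF \<open>T > 0\<close> _
          mexp_has_vector_derivative M_derivative])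
      (use Suc.prems in simp)
  then show ?case by (simp add: matrix_vector_mul_assoc)
qed

lemma sampled_derivatives_of_mexp_eq_on_interval:
  fixes M N :: "real^'n^'n"
  assumes "T > 0" and eq: "\<And>t. t \<in> {0..T} \<Longrightarrow> mexp (t *\<^sub>R M) *v x = mexp (t *\<^sub>R N) *v x"
    and t: "t \<in> {0..T}"
  shows "M *v nderiv i (\<lambda>t. mexp (t *\<^sub>R N) *v x) t = nderiv (Suc i) (\<lambda>t. mexp (t *\<^sub>R N) *v x) t"
proof -
  have "M *v nderiv i (\<lambda>t. mexp (t *\<^sub>R N) *v x) t = M *v (mexp (t *\<^sub>R M) *v (mpow M i *v x))"
    using mexp_mult_mpow_eq_on_interval[OF \<open>T > 0\<close> eq t, of i] by (simp add: nderiv_mexp)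
  also have "\<dots> = mexp (t *\<^sub>R M) *v (mpow M (Suc i) *v x)"
    by (simp only: mexp_mult_vector_commute) (simp add: matrix_vector_mul_assoc)
  also have "\<dots> = nderiv (Suc i) (\<lambda>t. mexp (t *\<^sub>R N) *v x) t"
    by (simp only: mexp_mult_mpow_eq_on_interval[OF \<open>T > 0\<close> eq t] nderiv_mexp)
  finally show ?thesis .
qed

lemma mexp_eq_of_derivatives_at_zero:
  fixes M N :: "real^'n^'n"
  assumes "\<And>i. i < CARD('n) \<Longrightarrow>
      M *v nderiv i (\<lambda>t. mexp (t *\<^sub>R N) *v x) 0 = nderiv (Suc i) (\<lambda>t. mexp (t *\<^sub>R N) *v x) 0"
  shows "mexp (t *\<^sub>R M) *v x = mexp (t *\<^sub>R N) *v x"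
proof (rule mexp_mult_vector_eq_of_mpow_eq, rule mpow_mult_vector_eq_of_krylov)
  fix i assume "i < CARD('n)"
  from assms[OF this] show "M *v (mpow N i *v x) = mpow N (Suc i) *v x"
    by (simp add: nderiv_mexp mexp_zero_mult_vector)
qed

section \<open>Matrix algebra\<close>

lemma matrix_inv_left: "invertible (S::'a::semiring_1^'n^'m) \<Longrightarrow> matrix_inv S ** S = mat 1"
  unfolding invertible_def matrix_inv_def by (rule someI2_ex) auto

lemma matrix_inv_right: "invertible (S::'a::semiring_1^'n^'m) \<Longrightarrow> S ** matrix_inv S = mat 1"
  unfolding invertible_def matrix_inv_def by (rule someI2_ex) auto

lemma matrix_inv_unique_left:
  "invertible (S::'a::semiring_1^'n^'n) \<Longrightarrow> L ** S = mat 1 \<Longrightarrow> matrix_inv S = L"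
  by (metis matrix_mul_assoc matrix_mul_lid matrix_mul_rid matrix_inv_right)

lemma matrix_diff_ldistrib: "(A::'a::ring_1^'n^'m) ** (B - C) = A ** B - A ** (C::'a^'k^'n)"
  by (simp add: matrix_matrix_mult_def vec_eq_iff algebra_simps sum_subtractf)

lemma transpose_matrix_inv_sym:
  assumes "sym_mat (S::real^'n^'n)" "invertible S"
  shows "transpose (matrix_inv S) = matrix_inv S"
proof (rule matrix_inv_unique_left[symmetric, OF assms(2)])
  have "transpose (matrix_inv S) ** S = transpose (S ** matrix_inv S)"
    using assms(1) by (simp add: sym_mat_def matrix_transpose_mul)
  then show "transpose (matrix_inv S) ** S = mat 1"
    by (simp add: matrix_inv_right[OF assms(2)])
qed

lemma psd_ge_imp_invertible:
  assumes "psd_ge (S::real^'n^'n) c" "c > 0"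
  shows "invertible S"
proof -
  have "x = 0" if "S *v x = 0" for x
  proof -
    from assms(1) that have "c * (x \<bullet> x) \<le> 0" by (auto simp: psd_ge_def dest: spec[of _ x])
    with assms(2) show "x = 0" by (metis mult_le_0_iff inner_gt_zero_iff not_le)
  qed
  then obtain L where "L ** S = mat 1" using matrix_left_invertible_ker by blast
  then show ?thesis using invertible_left_inverse by blast
qed

lemma pd_mat_imp_psd_ge:
  assumes "pd_mat (S::real^'n^'n)"
  obtains l where "l > 0" "psd_ge S l"
proof -
  let ?q = "\<lambda>x::real^'n. x \<bullet> (S *v x)"
  have "sphere (0::real^'n) 1 \<noteq> {}"
    using norm_axis_1[of "undefined::'n"] by (metis mem_sphere_0 empty_iff)
  then obtain u where u: "u \<in> sphere 0 1" "\<And>y. y \<in> sphere 0 1 \<Longrightarrow> ?q u \<le> ?q y"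
    using continuous_attains_inf[OF compact_sphere _ continuous_on_inner[OF continuous_on_id
          linear_continuous_on[OF matrix_vector_mul_bounded_linear]]]
    by blast
  have "?q u > 0" using assms u(1) unfolding pd_mat_def by (metis mem_sphere_0 norm_zero zero_neq_one)
  moreover have "psd_ge S (?q u)"
    unfolding psd_ge_def
  proof
    fix x :: "real^'n"
    show "?q u * (x \<bullet> x) \<le> ?q x"
    proof (cases "x = 0")
      case False
      have "?q u \<le> ?q ((1 / norm x) *\<^sub>R x)" using False by (intro u(2)) simp
      also have "\<dots> = ?q x / (norm x)\<^sup>2"
        by (simp add: matrix_vector_mult_scaleR power2_eq_square field_simps)
      finally show ?thesis using False by (simp add: field_simps dot_square_norm)
    qed simp
  qed
  ultimately show ?thesis by (rule that)
qed

lemma psd_ge_scaleR: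
  assumes "psd_ge S l" "c \<ge> 0"
  shows "psd_ge (c *\<^sub>R S) (c * l)"
  using assms mult_left_mono
  by (fastforce simp: psd_ge_def scaleR_matrix_vector_assoc[symmetric] mult.assoc)

lemma psd_ge_mono: "psd_ge S l \<Longrightarrow> e \<le> l \<Longrightarrow> psd_ge S e"
  unfolding psd_ge_def by (meson inner_ge_zero mult_right_mono order_trans)

lemma matrix_inv_scaleR:
  fixes R :: "real^'n^'n"
  assumes "c \<noteq> 0" "invertible R"
  shows "matrix_inv (c *\<^sub>R R) = inverse c *\<^sub>R matrix_inv R"
proof (rule matrix_inv_unique_left)
  show "invertible (c *\<^sub>R R)" using assms by (simp add: scalar_invertible)
  show "inverse c *\<^sub>R matrix_inv R ** (c *\<^sub>R R) = mat 1"
    using assms by (simp add: matrix_scalar_ac scalar_matrix_assoc[symmetric] matrix_inv_left)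
qed

lemma gain_scaleR:
  "c \<noteq> 0 \<Longrightarrow> invertible R \<Longrightarrow> gain B (c *\<^sub>R R) (c *\<^sub>R P) = gain B R P"
  by (simp add: gain_def matrix_inv_scaleR matrix_scalar_ac scalar_matrix_assoc[symmetric])

lemma riccati_scaleR:
  "c \<noteq> 0 \<Longrightarrow> invertible R \<Longrightarrow>
    riccati A B (c *\<^sub>R Q) (c *\<^sub>R R) (c *\<^sub>R P) = c *\<^sub>R riccati A B Q R P"
  by (simp add: riccati_def matrix_inv_scaleR matrix_scalar_ac scalar_matrix_assoc[symmetric]
      scaleR_add_right scaleR_diff_right)

section \<open>The problems (P1) and (P2)\<close>

lemma integral_eq_0_iff_continuous_nonneg:
  fixes f :: "real \<Rightarrow> real"
  assumes "a < b" "continuous_on {a..b} f" "\<And>t. t \<in> {a..b} \<Longrightarrow> 0 \<le> f t"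
  shows "integral {a..b} f = 0 \<longleftrightarrow> (\<forall>t \<in> {a..b}. f t = 0)"
proof
  assume "integral {a..b} f = 0"
  then have "(f has_integral 0) (cbox a b)"
    using integrable_continuous_interval[OF assms(2)] by (metis box_real(2) has_integral_integral)
  then show "\<forall>t \<in> {a..b}. f t = 0"
    using has_integral_0_cbox_imp_0[of a b f] assms by auto
next
  assume "\<forall>t \<in> {a..b}. f t = 0"
  then have "integral {a..b} f = integral {a..b} (\<lambda>_. 0)" by (intro integral_cong) auto
  then show "integral {a..b} f = 0" by simp
qed

lemma mnorm2_eq_0_iff: "mnorm2 M = 0 \<longleftrightarrow> M = 0"
proof -
  have "mnorm2 M = 0 \<longleftrightarrow> (\<forall>x. M *v x = 0)"
    unfolding mnorm2_def by (rule onorm_eq_0[OF matrix_vector_mul_bounded_linear])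
  also have "\<dots> \<longleftrightarrow> M = 0" by (auto simp: matrix_eq)
  finally show ?thesis .
qed

lemma J1_nonneg: "0 \<le> J1 Ks AKs x0 T Ah Bh Qh Rh Ph"
  unfolding J1_def
  by (cases "(\<lambda>t. (norm (traj Ah Bh (gain Bh Rh Ph) x0 t - mexp (t *\<^sub>R AKs) *v x0))\<^sup>2)
      integrable_on {0..T}") (simp_all add: integral_nonneg not_integrable_integral)

lemma J1_eq_0_iff:
  assumes "T > 0"
  shows "J1 Ks AKs x0 T Ah Bh Qh Rh Ph = 0 \<longleftrightarrow>
    gain Bh Rh Ph = Ks \<and>
    (\<forall>t \<in> {0..T}. mexp (t *\<^sub>R (Ah - Bh ** Ks)) *v x0 = mexp (t *\<^sub>R AKs) *v x0)"
proof -
  define G where "G = gain Bh Rh Ph"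
  define f where "f t = (norm (mexp (t *\<^sub>R (Ah - Bh ** G)) *v x0 - mexp (t *\<^sub>R AKs) *v x0))\<^sup>2"
    for t
  have J1_eq: "J1 Ks AKs x0 T Ah Bh Qh Rh Ph = (mnorm2 (G - Ks))\<^sup>2 + integral {0..T} f"
    unfolding J1_def traj_def f_def G_def ..
  have cont: "continuous_on {0..T} f"
    unfolding f_def by (intro continuous_intros continuous_on_mexp)
  have integral_0: "integral {0..T} f = 0 \<longleftrightarrow> (\<forall>t \<in> {0..T}. f t = 0)"
    by (rule integral_eq_0_iff_continuous_nonneg[OF \<open>T > 0\<close> cont]) (simp add: f_def)
  have "0 \<le> integral {0..T} f"
    by (rule integral_nonneg[OF integrable_continuous_interval[OF cont]]) (simp add: f_def)
  then have "J1 Ks AKs x0 T Ah Bh Qh Rh Ph = 0 \<longleftrightarrow> G = Ks \<and> integral {0..T} f = 0"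
    unfolding J1_eq by (simp add: add_nonneg_eq_0_iff mnorm2_eq_0_iff)
  also have "\<dots> \<longleftrightarrow> G = Ks \<and>
      (\<forall>t \<in> {0..T}. mexp (t *\<^sub>R (Ah - Bh ** Ks)) *v x0 = mexp (t *\<^sub>R AKs) *v x0)"
    unfolding integral_0 f_def by auto
  finally show ?thesis unfolding G_def .
qed

lemma P1_optimal_iff_J1_eq_0:
  assumes "\<exists>A' B' Q' R' P'. P1_feasible \<epsilon> A' B' Q' R' P' \<and> J1 Ks AKs x0 T A' B' Q' R' P' = 0"
  shows "P1_optimal \<epsilon> Ks AKs x0 T Ah Bh Qh Rh Ph \<longleftrightarrow>
    P1_feasible \<epsilon> Ah Bh Qh Rh Ph \<and> J1 Ks AKs x0 T Ah Bh Qh Rh Ph = 0"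
proof
  assume "P1_optimal \<epsilon> Ks AKs x0 T Ah Bh Qh Rh Ph"
  then have "P1_feasible \<epsilon> Ah Bh Qh Rh Ph" "J1 Ks AKs x0 T Ah Bh Qh Rh Ph \<le> 0"
    using assms unfolding P1_optimal_def by force+
  then show "P1_feasible \<epsilon> Ah Bh Qh Rh Ph \<and> J1 Ks AKs x0 T Ah Bh Qh Rh Ph = 0"
    using J1_nonneg order.antisym by blast
qed (simp add: P1_optimal_def J1_nonneg)

lemma exists_P1_feasible_J1_eq_0:
  fixes A :: "real^'n^'n" and B :: "real^'m^'n"
  assumes "sym_mat Q" "psd_ge Q 0" "sym_mat R" "pd_mat R" "sym_mat P" "pd_mat P"
    and "riccati A B Q R P = 0" and "T > 0"
  shows "\<exists>A' B' Q' R' P'. P1_feasible \<epsilon> A' B' Q' R' P' \<and>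
           J1 (gain B R P) (A - B ** gain B R P) x0 T A' B' Q' R' P' = 0"
proof -
  obtain lP where lP: "lP > 0" "psd_ge P lP" using pd_mat_imp_psd_ge[OF \<open>pd_mat P\<close>] .
  obtain lR where lR: "lR > 0" "psd_ge R lR" using pd_mat_imp_psd_ge[OF \<open>pd_mat R\<close>] .
  \<comment> \<open>the 1 keeps c positive without assuming \<open>\<epsilon> > 0\<close>\<close>
  define c where "c = max 1 (max (\<epsilon> / lP) (\<epsilon> / lR))"
  have "1 \<le> c" "\<epsilon> / lP \<le> c" "\<epsilon> / lR \<le> c" by (simp_all add: c_def)
  then have "c > 0" "\<epsilon> \<le> c * lP" "\<epsilon> \<le> c * lR"
    using lP(1) lR(1) by (simp_all add: pos_divide_le_eq)
  have "invertible R" using psd_ge_imp_invertible[OF lR(2) lR(1)] .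
  have "P1_feasible \<epsilon> A B (c *\<^sub>R Q) (c *\<^sub>R R) (c *\<^sub>R P)"
    unfolding P1_feasible_def
    using assms \<open>c > 0\<close> \<open>\<epsilon> \<le> c * lP\<close> \<open>\<epsilon> \<le> c * lR\<close> \<open>invertible R\<close>
      psd_ge_scaleR[OF \<open>psd_ge Q 0\<close>, of c] psd_ge_scaleR[OF lR(2), of c] psd_ge_scaleR[OF lP(2), of c]
    by (auto simp: sym_mat_def transpose_scalar riccati_scaleR intro: psd_ge_mono)
  moreover have "J1 (gain B R P) (A - B ** gain B R P) x0 T A B (c *\<^sub>R Q) (c *\<^sub>R R) (c *\<^sub>R P) = 0"
    using \<open>T > 0\<close> \<open>c > 0\<close> \<open>invertible R\<close> by (simp add: J1_eq_0_iff gain_scaleR)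
  ultimately show ?thesis by blast
qed

lemma P2_equations_of_riccati:
  fixes Ah :: "real^'n^'n" and Bh :: "real^'m^'n"
  assumes "sym_mat Ph" "sym_mat Rh" "invertible Rh"
    and are: "riccati Ah Bh Qh Rh Ph = 0" and K: "gain Bh Rh Ph = K"
  shows "transpose (transpose Ah ** Ph) + transpose Ah ** Ph - transpose K ** Rh ** K + Qh = 0"
    and "transpose (transpose Ah ** Ph) - transpose K ** Rh ** K = Ph ** (Ah - Bh ** K)"
proof -
  have tP: "transpose Ph = Ph" using \<open>sym_mat Ph\<close> by (simp add: sym_mat_def)
  have "transpose K ** Rh = Ph ** Bh ** (matrix_inv Rh ** Rh)"
    unfolding K[symmetric] gain_def
    by (simp add: matrix_transpose_mul tP transpose_matrix_inv_sym assms matrix_mul_assoc)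
  then have KRK: "transpose K ** Rh ** K = Ph ** Bh ** K"
    by (simp add: matrix_inv_left[OF \<open>invertible Rh\<close>])
  have PBK: "Ph ** Bh ** K = Ph ** Bh ** matrix_inv Rh ** transpose Bh ** Ph"
    unfolding K[symmetric] gain_def by (simp add: matrix_mul_assoc)
  have tZ: "transpose (transpose Ah ** Ph) = Ph ** Ah"
    by (simp add: matrix_transpose_mul tP)
  show "transpose (transpose Ah ** Ph) + transpose Ah ** Ph - transpose K ** Rh ** K + Qh = 0"
    using are unfolding riccati_def tZ KRK PBK by (simp add: algebra_simps)
  show "transpose (transpose Ah ** Ph) - transpose K ** Rh ** K = Ph ** (Ah - Bh ** K)"
    unfolding tZ KRK by (simp add: matrix_diff_ldistrib matrix_mul_assoc)
qed

lemma riccati_of_P2_equations: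
  fixes Z Ph :: "real^'n^'n" and K :: "real^'n^'m"
  assumes "sym_mat Ph" "sym_mat Rh" "invertible Ph" "invertible Rh"
    and eq1: "transpose Z + Z - transpose K ** Rh ** K + Qh = 0"
    and eq2: "transpose Z - transpose K ** Rh ** K = Ph ** M"
  defines "Ah \<equiv> matrix_inv Ph ** transpose Z" and "Bh \<equiv> matrix_inv Ph ** transpose K ** Rh"
  shows "gain Bh Rh Ph = K" and "riccati Ah Bh Qh Rh Ph = 0" and "Ah - Bh ** K = M"
proof -
  have tR: "transpose Rh = Rh" using \<open>sym_mat Rh\<close> by (simp add: sym_mat_def)
  have tiP: "transpose (matrix_inv Ph) = matrix_inv Ph"
    by (rule transpose_matrix_inv_sym[OF \<open>sym_mat Ph\<close> \<open>invertible Ph\<close>])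
  note inv = matrix_inv_left[OF \<open>invertible Ph\<close>] matrix_inv_right[OF \<open>invertible Ph\<close>]
    matrix_inv_left[OF \<open>invertible Rh\<close>]
  have "gain Bh Rh Ph = (matrix_inv Rh ** Rh) ** K ** (matrix_inv Ph ** Ph)"
    unfolding gain_def Bh_def by (simp add: matrix_transpose_mul tR tiP matrix_mul_assoc)
  then show gain: "gain Bh Rh Ph = K" by (simp add: inv)
  have "transpose Ah ** Ph = Z ** (matrix_inv Ph ** Ph)"
    unfolding Ah_def by (simp add: matrix_transpose_mul tiP matrix_mul_assoc)
  moreover have "Ph ** Ah = (Ph ** matrix_inv Ph) ** transpose Z"
    unfolding Ah_def by (simp add: matrix_mul_assoc)
  moreover have PB: "Ph ** Bh = transpose K ** Rh"
    unfolding Bh_def by (simp add: matrix_mul_assoc inv)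
  moreover have "Ph ** Bh ** matrix_inv Rh ** transpose Bh ** Ph = Ph ** Bh ** gain Bh Rh Ph"
    unfolding gain_def by (simp add: matrix_mul_assoc)
  ultimately show "riccati Ah Bh Qh Rh Ph = 0"
    using eq1 by (simp add: riccati_def gain inv algebra_simps)
  have "Ah - Bh ** K = matrix_inv Ph ** (transpose Z - transpose K ** Rh ** K)"
    unfolding Ah_def Bh_def by (simp add: matrix_diff_ldistrib matrix_mul_assoc)
  then show "Ah - Bh ** K = M"
    by (simp add: eq2 matrix_mul_assoc inv)
qed

lemma P2_feasible_of_P1_solution:
  fixes K :: "real^'n^'m" and AK :: "real^'n^'n"
  assumes "T > 0" and ts: "\<forall>t \<in> set ts. 0 \<le> t \<and> t \<le> T" and "\<epsilon> > 0"
    and feas: "P1_feasible \<epsilon> Ah Bh Qh Rh Ph" and J0: "J1 K AK x0 T Ah Bh Qh Rh Ph = 0"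
  shows "P2_feasible \<epsilon> K (\<lambda>t. mexp (t *\<^sub>R AK) *v x0) ts (transpose Ah ** Ph) Qh Rh Ph (Ah - Bh ** K)"
proof -
  have gain: "gain Bh Rh Ph = K"
    and traj: "\<And>t. t \<in> {0..T} \<Longrightarrow> mexp (t *\<^sub>R (Ah - Bh ** K)) *v x0 = mexp (t *\<^sub>R AK) *v x0"
    using J0[unfolded J1_eq_0_iff[OF \<open>T > 0\<close>]] by auto
  have F: "sym_mat Qh" "sym_mat Rh" "sym_mat Ph" "riccati Ah Bh Qh Rh Ph = 0"
    "psd_ge Qh 0" "psd_ge Rh \<epsilon>" "psd_ge Ph \<epsilon>"
    using feas unfolding P1_feasible_def by auto
  have "invertible Rh" using psd_ge_imp_invertible[OF F(6) \<open>\<epsilon> > 0\<close>] .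
  note P2_equations = P2_equations_of_riccati[OF F(3,2) \<open>invertible Rh\<close> F(4) gain]
  have derivatives: "\<forall>i < CARD('n). \<forall>t \<in> set ts.
      (Ah - Bh ** K) *v nderiv i (\<lambda>t. mexp (t *\<^sub>R AK) *v x0) t
      = nderiv (Suc i) (\<lambda>t. mexp (t *\<^sub>R AK) *v x0) t"
  proof (intro allI impI ballI)
    fix i t assume "t \<in> set ts"
    then show "(Ah - Bh ** K) *v nderiv i (\<lambda>t. mexp (t *\<^sub>R AK) *v x0) t
      = nderiv (Suc i) (\<lambda>t. mexp (t *\<^sub>R AK) *v x0) t"
      by (intro sampled_derivatives_of_mexp_eq_on_interval[OF \<open>T > 0\<close> traj]) (use ts in auto)
  qed
  show ?thesis
    unfolding P2_feasible_def by (intro conjI) (fact F P2_equations derivatives)+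
qed

lemma P1_solution_of_P2_feasible:
  fixes K :: "real^'n^'m" and AK :: "real^'n^'n"
  assumes "\<epsilon> > 0" "T > 0" "0 \<in> set ts"
    and feas: "P2_feasible \<epsilon> K (\<lambda>t. mexp (t *\<^sub>R AK) *v x0) ts Z Qh Rh Ph M"
  defines "Ah \<equiv> matrix_inv Ph ** transpose Z" and "Bh \<equiv> matrix_inv Ph ** transpose K ** Rh"
  shows "P1_feasible \<epsilon> Ah Bh Qh Rh Ph" and "J1 K AK x0 T Ah Bh Qh Rh Ph = 0" and "gain Bh Rh Ph = K"
proof -
  have F: "sym_mat Qh" "sym_mat Rh" "sym_mat Ph"
    "transpose Z + Z - transpose K ** Rh ** K + Qh = 0"
    "transpose Z - transpose K ** Rh ** K = Ph ** M"
    "psd_ge Qh 0" "psd_ge Rh \<epsilon>" "psd_ge Ph \<epsilon>"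
    and derivatives: "\<forall>i < CARD('n). \<forall>t \<in> set ts.
      M *v nderiv i (\<lambda>t. mexp (t *\<^sub>R AK) *v x0) t = nderiv (Suc i) (\<lambda>t. mexp (t *\<^sub>R AK) *v x0) t"
    using feas unfolding P2_feasible_def by auto
  have "invertible Ph" "invertible Rh"
    using psd_ge_imp_invertible F(7,8) \<open>\<epsilon> > 0\<close> by blast+
  note P2_solution = riccati_of_P2_equations[OF F(3,2) this F(4,5), folded Ah_def Bh_def]
  show "gain Bh Rh Ph = K" by (fact P2_solution)
  show "P1_feasible \<epsilon> Ah Bh Qh Rh Ph"
    unfolding P1_feasible_def by (intro conjI) (fact F P2_solution)+
  have "mexp (t *\<^sub>R M) *v x0 = mexp (t *\<^sub>R AK) *v x0" for t
    by (rule mexp_eq_of_derivatives_at_zero) (use derivatives \<open>0 \<in> set ts\<close> in blast)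
  then show "J1 K AK x0 T Ah Bh Qh Rh Ph = 0"
    by (simp add: J1_eq_0_iff[OF \<open>T > 0\<close>] P2_solution)
qed

theorem theorem1:
  fixes A :: "real^'n^'n" and B :: "real^'m^'n"
    and Q :: "real^'n^'n" and R :: "real^'m^'m" and P :: "real^'n^'n"
    and x0 :: "real^'n" and T \<epsilon> :: real and ts :: "real list"
  assumes stab: "stabilizable A B"
    and Q_sym: "sym_mat Q" and Q_psd: "psd_ge Q 0"
    and R_sym: "sym_mat R" and R_pd: "pd_mat R"
    and detect: "\<exists>S. sym_mat S \<and> psd_ge S 0 \<and> S ** S = Q \<and> detectable A S"
    and P_sym: "sym_mat P" and P_pd: "pd_mat P"
    and P_are: "riccati A B Q R P = 0"
    and P_stab: "hurwitz (A - B ** gain B R P)"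
    and T_pos: "T > 0" and eps_pos: "\<epsilon> > 0"
    and ts_range: "\<forall>t \<in> set ts. 0 \<le> t \<and> t \<le> T"
    and ts_zero: "0 \<in> set ts"
  shows
   "(\<forall>Ah Bh Qh Rh Ph.
       P1_optimal \<epsilon> (gain B R P) (A - B ** gain B R P) x0 T Ah Bh Qh Rh Ph \<longrightarrow>
       P2_feasible \<epsilon> (gain B R P) (\<lambda>t. mexp (t *\<^sub>R (A - B ** gain B R P)) *v x0) ts
         (transpose Ah ** Ph) Qh Rh Ph (Ah - Bh ** gain B R P))
    \<and>
    (\<forall>Z Qh Rh Ph M.
       P2_feasible \<epsilon> (gain B R P) (\<lambda>t. mexp (t *\<^sub>R (A - B ** gain B R P)) *v x0) ts
         Z Qh Rh Ph M \<longrightarrow>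
       (let Ah = matrix_inv Ph ** transpose Z;
            Bh = matrix_inv Ph ** transpose (gain B R P) ** Rh
        in P1_optimal \<epsilon> (gain B R P) (A - B ** gain B R P) x0 T Ah Bh Qh Rh Ph \<and>
           J1 (gain B R P) (A - B ** gain B R P) x0 T Ah Bh Qh Rh Ph = 0 \<and>
           gain Bh Rh Ph = gain B R P))"
proof -
  have optimal_iff: "P1_optimal \<epsilon> (gain B R P) (A - B ** gain B R P) x0 T Ah Bh Qh Rh Ph \<longleftrightarrow>
      P1_feasible \<epsilon> Ah Bh Qh Rh Ph \<and> J1 (gain B R P) (A - B ** gain B R P) x0 T Ah Bh Qh Rh Ph = 0"
    for Ah Bh Qh Rh Ph
    by (rule P1_optimal_iff_J1_eq_0[OF
          exists_P1_feasible_J1_eq_0[OF Q_sym Q_psd R_sym R_pd P_sym P_pd P_are T_pos]])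
  show ?thesis
    unfolding optimal_iff Let_def
    using P2_feasible_of_P1_solution[OF T_pos ts_range eps_pos]
      P1_solution_of_P2_feasible[OF eps_pos T_pos ts_zero]
    by (intro conjI allI impI) (elim conjE; blast)+
qed

end
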